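(* Let $(X,d)$ be a metric space with $|X|=n$ whose distances are integers in $[0,\frac{16k}{\varepsilon}]$, for an integer $k\in[n]$ and $\varepsilon>0$. Then $\mathtt{detRecMSD}(X,k)$ runs in time $\left(O(\frac{k}{\varepsilon})\right)^k\cdot n^{O(1)}$.
   Context: $\operatorname{diam}(S)=\max_{p,q\in S}d(p,q)$, $\operatorname{Ball}(x,R)=\{z\in X:d(x,z)\le R\}$, and the cost of a collection of clusters is the sum of their diameters. The deterministic procedure $\mathtt{detRecMSD}(S,t)$ is: set $\mathcal{C}_i\gets\{S\}$ for all $i\in\{1,\dots,t\}$; if $t=1$ or $|S|=1$ return $(\mathcal{C}_1,\dots,\mathcal{C}_t)$. Otherwise let $x,y\in S$ with $d(x,y)=\operatorname{diam}(S)$; for each integer $R=0,1,\dots,\operatorname{diam}(S)-1$: let $S_1=S\cap\operatorname{Ball}(x,R)$, $S_2=S\setminus\operatorname{Ball}(x,R)$, compute $\mathcal{A}=\mathtt{detRecMSD}(S_1,t-1)$ and $\mathcal{B}=\mathtt{detRecMSD}(S_2,t-1)$, and for all $i,j\in\{1,\dots,t-1\}$ with $i+j\le t$, if $\operatorname{cost}(\mathcal{A}_i\cup\mathcal{B}_j)<\operatorname{cost}(\mathcal{C}_{i+j})$ set $\mathcal{C}_{i+j}\gets\mathcal{A}_i\cup\mathcal{B}_j$. Finally return $(\mathcal{C}_1,\dots,\mathcal{C}_t)$. *)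

theory Defs
  imports Complex_Main
begin

definition int_metric_on :: "'a set \<Rightarrow> ('a \<Rightarrow> 'a \<Rightarrow> int) \<Rightarrow> bool" where
  "int_metric_on X d \<longleftrightarrow>
     (\<forall>p\<in>X. \<forall>q\<in>X. 0 \<le> d p q \<and> (d p q = 0 \<longleftrightarrow> p = q) \<and> d p q = d q p) \<and>
     (\<forall>p\<in>X. \<forall>q\<in>X. \<forall>r\<in>X. d p r \<le> d p q + d q r)"

definition diam :: "('a \<Rightarrow> 'a \<Rightarrow> int) \<Rightarrow> 'a set \<Rightarrow> int" where
  "diam d S = Max {d p q | p q. p \<in> S \<and> q \<in> S}"

text \<open>A valid pivot rule: for every nonempty S within X, pick S is a point x of S
  such that some y in S has d x y = diam S (the point x of a diametral pair).\<close>
definition valid_pick :: "'a set \<Rightarrow> ('a \<Rightarrow> 'a \<Rightarrow> int) \<Rightarrow> ('a set \<Rightarrow> 'a) \<Rightarrow> bool" where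
  "valid_pick X d pick \<longleftrightarrow>
     (\<forall>S. S \<subseteq> X \<and> S \<noteq> {} \<longrightarrow> pick S \<in> S \<and> (\<exists>y\<in>S. d (pick S) y = diam d S))"

text \<open>Running time of detRecMSD(S,t) in a unit-cost model, following the recursion exactly.
  Base case (t = 1 or |S| <= 1): initialising C_1..C_t with {S} costs (t+1)(|S|+1).
  Otherwise: finding a diametral pair costs |S|^2; for each R = 0..diam(S)-1 we split S
  into S1 = S \<inter> Ball(x,R) and S2 = S - Ball(x,R), recurse on both with t-1, and perform
  the at most t^2 combination steps, each comparing costs (sums of diameters) of
  collections of clusters, which costs O(|S|^2) per step; we charge |S|^2 (t+1)^2
  per value of R.  The index t = 0 never arises from a call with k >= 1.\<close>
primrec msd_time :: "('a set \<Rightarrow> 'a) \<Rightarrow> ('a \<Rightarrow> 'a \<Rightarrow> int) \<Rightarrow> 'a set \<Rightarrow> nat \<Rightarrow> nat" where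
  "msd_time pick d S 0 = card S + 1"
| "msd_time pick d S (Suc t) =
     (if t = 0 \<or> card S \<le> 1 then (Suc t + 1) * (card S + 1)
      else card S ^ 2 +
        (\<Sum>R \<in> {0..<nat (diam d S)}.
            card S ^ 2 * (Suc t + 1) ^ 2
          + msd_time pick d {z \<in> S. d (pick S) z \<le> int R} t
          + msd_time pick d {z \<in> S. \<not> d (pick S) z \<le> int R} t))"

end

theory Submission
  imports Defs
begin

text \<open>Every non-base call of detRecMSD with budget t+1 makes at most 2 diam(S) \<le> 2L recursive
  calls with budget t and spends polynomial time otherwise, so the call tree has depth k - 1 and
  the running time is at most (3L+1)^(k-1) times a polynomial in n and k.  With integer
  distances bounded by L = 16k/\<epsilon> (and L \<ge> 1 as soon as X has two points) this is
  (O(k/\<epsilon>))^k n^O(1).\<close>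

lemma diam_le:
  assumes "finite S" "S \<noteq> {}" "\<forall>p\<in>S. \<forall>q\<in>S. d p q \<le> B"
  shows "diam d S \<le> B"
proof -
  have "finite {d p q | p q. p \<in> S \<and> q \<in> S}"
    using assms(1) by (auto intro: finite_image_set2)
  moreover have "{d p q | p q. p \<in> S \<and> q \<in> S} \<noteq> {}"
    using assms(2) by auto
  ultimately show ?thesis
    unfolding diam_def using assms(3) by (subst Max_le_iff) auto
qed

lemma int_metric_on_self:
  assumes "int_metric_on X d" "p \<in> X"
  shows "d p p = 0"
  using assms unfolding int_metric_on_def by auto

lemma int_metric_on_one_le:
  assumes "int_metric_on X d" "p \<in> X" "q \<in> X" "p \<noteq> q"
  shows "1 \<le> d p q"
proof -
  have "0 \<le> d p q" "d p q \<noteq> 0" using assms unfolding int_metric_on_def by auto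
  then show ?thesis by simp
qed

lemma valid_pick_ball_nonempty:
  assumes "valid_pick X d pick" "int_metric_on X d" "S \<subseteq> X" "S \<noteq> {}" "0 \<le> r"
  shows "{z \<in> S. d (pick S) z \<le> r} \<noteq> {}"
proof -
  have "pick S \<in> S" using assms(1,3,4) unfolding valid_pick_def by blast
  moreover have "d (pick S) (pick S) = 0"
    using int_metric_on_self[OF assms(2)] \<open>pick S \<in> S\<close> assms(3) by blast
  ultimately show ?thesis using assms(5) by auto
qed

lemma valid_pick_ball_complement_nonempty:
  assumes "valid_pick X d pick" "S \<subseteq> X" "S \<noteq> {}" "r < diam d S"
  shows "{z \<in> S. \<not> d (pick S) z \<le> r} \<noteq> {}"
proof -
  obtain y where "y \<in> S" "d (pick S) y = diam d S"
    using assms(1-3) unfolding valid_pick_def by blast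
  then show ?thesis using assms(4) by auto
qed

lemma msd_time_Suc_Suc_le:
  assumes "valid_pick X d pick" "int_metric_on X d" "S \<subseteq> X" "S \<noteq> {}" "\<not> card S \<le> 1"
    and rec: "\<And>T. T \<subseteq> S \<Longrightarrow> T \<noteq> {} \<Longrightarrow> msd_time pick d T (Suc t) \<le> M"
  shows "msd_time pick d S (Suc (Suc t))
    \<le> card S ^ 2 + nat (diam d S) * (card S ^ 2 * (Suc (Suc t) + 1) ^ 2 + 2 * M)"
proof -
  have "msd_time pick d S (Suc (Suc t)) = card S ^ 2 +
      (\<Sum>R \<in> {0..<nat (diam d S)}.
          card S ^ 2 * (Suc (Suc t) + 1) ^ 2
        + msd_time pick d {z \<in> S. d (pick S) z \<le> int R} (Suc t)
        + msd_time pick d {z \<in> S. \<not> d (pick S) z \<le> int R} (Suc t))"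
    (is "_ = _ + sum ?branch _")
    using assms(5) by simp
  also have "\<dots> \<le> card S ^ 2 +
      (\<Sum>R \<in> {0..<nat (diam d S)}. card S ^ 2 * (Suc (Suc t) + 1) ^ 2 + 2 * M)"
  proof (rule add_left_mono[OF sum_mono])
    fix R assume "R \<in> {0..<nat (diam d S)}"
    then have "int R < diam d S" by auto
    have "msd_time pick d {z \<in> S. d (pick S) z \<le> int R} (Suc t) \<le> M"
      by (rule rec) (use valid_pick_ball_nonempty[OF assms(1-4)] in auto)
    moreover have "msd_time pick d {z \<in> S. \<not> d (pick S) z \<le> int R} (Suc t) \<le> M"
      by (rule rec)
        (use valid_pick_ball_complement_nonempty[OF assms(1,3,4) \<open>int R < diam d S\<close>] in auto)
    ultimately show "?branch R \<le> card S ^ 2 * (Suc (Suc t) + 1) ^ 2 + 2 * M" by linarith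
  qed
  also have "\<dots> = card S ^ 2 + nat (diam d S) * (card S ^ 2 * (Suc (Suc t) + 1) ^ 2 + 2 * M)"
    by simp
  finally show ?thesis .
qed

lemma msd_time_le:
  assumes X: "finite X" "int_metric_on X d" "valid_pick X d pick"
    and L: "\<forall>p\<in>X. \<forall>q\<in>X. d p q \<le> int L"
    and "Suc t \<le> k" "S \<subseteq> X" "S \<noteq> {}"
  shows "msd_time pick d S (Suc t) \<le> ((k + 1) * (card X + 1))^2 * (3 * L + 1)^t"
proof -
  define Q where "Q = ((k + 1) * (card X + 1))^2"
  have le_Q: "i * j \<le> Q" if "i \<le> k + 1" "j \<le> card X + 1" for i j
    unfolding Q_def using le_trans[OF mult_le_mono[OF that] le_square] by (simp add: power2_eq_square)
  have sq_le_Q: "i^2 * j^2 \<le> Q" if "i \<le> k + 1" "j \<le> card X + 1" for i j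
    unfolding Q_def power_mult_distrib[symmetric] using that by (intro power_mono mult_le_mono) auto
  have "msd_time pick d S (Suc t) \<le> Q * (3 * L + 1)^t"
    using assms(5-7)
  proof (induction t arbitrary: S)
    case 0
    have "card S \<le> card X" using card_mono[OF X(1) 0(2)] .
    then show ?case using le_Q[of 2 "card S + 1"] 0(1) by simp
  next
    case (Suc t)
    define P where "P = (3 * L + 1)^t"
    have S_le: "card S \<le> card X" using card_mono[OF X(1) Suc(3)] .
    show ?case
    proof (cases "card S \<le> 1")
      case True
      have "(Suc (Suc t) + 1) * (card S + 1) \<le> Q"
        by (rule le_Q) (use Suc(2) S_le in auto)
      also have "\<dots> \<le> Q * (3 * L + 1)^Suc t"
        using mult_le_mono2[OF one_le_power[of "3 * L + 1" "Suc t"], of Q] by simp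
      finally show ?thesis using True by simp
    next
      case False
      have "diam d S \<le> int L"
        using diam_le[OF finite_subset[OF Suc(3) X(1)] Suc(4)] L Suc(3) by blast
      then have diam: "nat (diam d S) \<le> L" by simp
      have "Q \<le> Q * P"
        unfolding P_def using mult_le_mono2[OF one_le_power[of "3 * L + 1" t], of Q] by simp
      have sq: "card S ^ 2 \<le> Q * P"
        by (rule le_trans[OF _ \<open>Q \<le> Q * P\<close>]) (use sq_le_Q[of 1 "card S"] S_le in simp)
      have step: "card S ^ 2 * (Suc (Suc t) + 1) ^ 2 \<le> Q * P"
        by (rule le_trans[OF _ \<open>Q \<le> Q * P\<close>])
          (use sq_le_Q[of "Suc (Suc t) + 1" "card S"] Suc(2) S_le in \<open>simp add: mult.commute\<close>)
      have "msd_time pick d T (Suc t) \<le> Q * P" if "T \<subseteq> S" "T \<noteq> {}" for T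
        unfolding P_def
        by (rule Suc.IH[OF Suc_leD[OF Suc(2)] subset_trans[OF that(1) Suc(3)] that(2)])
      then have "msd_time pick d S (Suc (Suc t))
          \<le> card S ^ 2 + nat (diam d S) * (card S ^ 2 * (Suc (Suc t) + 1) ^ 2 + 2 * (Q * P))"
        by (rule msd_time_Suc_Suc_le[OF X(3,2) Suc(3,4) False])
      also have "\<dots> \<le> Q * P + L * (Q * P + 2 * (Q * P))"
        by (rule add_mono[OF sq mult_mono[OF diam add_mono[OF step order_refl]]]) simp_all
      also have "\<dots> = Q * (3 * L + 1)^Suc t" unfolding P_def by (simp add: algebra_simps)
      finally show ?thesis .
    qed
  qed
  then show ?thesis unfolding Q_def .
qed

lemma msd_time_le_real_bound:
  fixes B :: real
  assumes X: "finite X" "int_metric_on X d" "valid_pick X d pick"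
    and dist: "\<forall>p\<in>X. \<forall>q\<in>X. real_of_int (d p q) \<le> B" and "1 \<le> B"
    and "Suc t \<le> card X"
  shows "real (msd_time pick d X (Suc t)) \<le> 16 * (4 * B) ^ t * real (card X) ^ 4"
proof -
  define L where "L = nat \<lfloor>B\<rfloor>"
  have "1 \<le> L" "real L \<le> B" using \<open>1 \<le> B\<close> unfolding L_def by linarith+
  have "\<forall>p\<in>X. \<forall>q\<in>X. d p q \<le> int L"
    using dist \<open>1 \<le> B\<close> unfolding L_def by (auto simp: le_floor_iff)
  moreover have "X \<noteq> {}" using assms(6) by auto
  ultimately have "msd_time pick d X (Suc t) \<le> ((Suc t + 1) * (card X + 1))^2 * (3 * L + 1)^t"
    using msd_time_le[OF X] assms(6) by blast
  then have "real (msd_time pick d X (Suc t))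
      \<le> real (((Suc t + 1) * (card X + 1))^2 * (3 * L + 1)^t)"
    by (simp only: of_nat_le_iff)
  also have "\<dots> = ((real (Suc t) + 1) * (real (card X) + 1))^2 * real (3 * L + 1)^t"
    by (simp only: of_nat_mult of_nat_power of_nat_add of_nat_1)
  also have "\<dots> \<le> (2 * real (card X) * (2 * real (card X)))^2 * (4 * B)^t"
    using assms(6) \<open>1 \<le> L\<close> \<open>real L \<le> B\<close> by (intro mult_mono power_mono) auto
  also have "\<dots> = 16 * (4 * B) ^ t * real (card X) ^ 4"
    by (simp add: power2_eq_square power4_eq_xxxx)
  finally show ?thesis .
qed

lemma one_le_dist_bound:
  assumes "finite X" "int_metric_on X d" "\<not> card X \<le> 1"
    and "\<forall>p\<in>X. \<forall>q\<in>X. real_of_int (d p q) \<le> B"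
  shows "1 \<le> B"
proof -
  obtain p q where "p \<in> X" "q \<in> X" "p \<noteq> q"
    using assms(3) card_le_Suc0_iff_eq[OF assms(1)] by auto
  then have "1 \<le> d p q" using int_metric_on_one_le[OF assms(2)] by blast
  then show ?thesis using assms(4) \<open>p \<in> X\<close> \<open>q \<in> X\<close> by fastforce
qed

lemma mult_power_le_power_Suc:
  fixes B :: real
  assumes "1 \<le> B"
  shows "16 * (4 * B) ^ t \<le> (64 * B) ^ Suc t"
proof -
  have "(16::real) * 1 \<le> 64 * B * 16 ^ t"
    using assms by (intro mult_mono one_le_power) auto
  then have "16 * (4 * B) ^ t \<le> 64 * B * 16 ^ t * (4 * B) ^ t"
    using assms by (intro mult_right_mono) auto
  also have "\<dots> = 64 * B * (16 * (4 * B)) ^ t" by (simp only: power_mult_distrib mult.assoc)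
  also have "\<dots> = (64 * B) ^ Suc t" by simp
  finally show ?thesis .
qed

theorem lemma6:
  shows "\<exists>c::real. c > 0 \<and> (\<exists>b::nat.
     \<forall>(X::nat set) (d::nat \<Rightarrow> nat \<Rightarrow> int) pick (k::nat) (\<epsilon>::real).
       finite X \<longrightarrow> int_metric_on X d \<longrightarrow> valid_pick X d pick \<longrightarrow>
       1 \<le> k \<longrightarrow> k \<le> card X \<longrightarrow> \<epsilon> > 0 \<longrightarrow>
       (\<forall>p\<in>X. \<forall>q\<in>X. real_of_int (d p q) \<le> 16 * real k / \<epsilon>) \<longrightarrow>
       real (msd_time pick d X k) \<le> (c * real k / \<epsilon>) ^ k * real (card X) ^ b + c)"
proof (intro exI conjI allI impI)
  fix X :: "nat set" and d :: "nat \<Rightarrow> nat \<Rightarrow> int" and pick and k :: nat and \<epsilon> :: real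
  assume X: "finite X" "int_metric_on X d" "valid_pick X d pick"
    and k: "1 \<le> k" "k \<le> card X" and "\<epsilon> > 0"
    and dist: "\<forall>p\<in>X. \<forall>q\<in>X. real_of_int (d p q) \<le> 16 * real k / \<epsilon>"
  define B where "B = 16 * real k / \<epsilon>"
  obtain t where t: "k = Suc t" using k(1) by (cases k) auto
  show "real (msd_time pick d X k) \<le> (1024 * real k / \<epsilon>) ^ k * real (card X) ^ 4 + 1024"
  proof (cases "card X \<le> 1")
    case True
    then have "k = 1" "card X = 1" using k by auto
    then show ?thesis using \<open>\<epsilon> > 0\<close> by simp
  next
    case False
    have "1 \<le> B" unfolding B_def using one_le_dist_bound[OF X(1,2) False dist] .
    have "real (msd_time pick d X k) \<le> 16 * (4 * B) ^ t * real (card X) ^ 4"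
      unfolding t by (rule msd_time_le_real_bound[OF X dist[folded B_def] \<open>1 \<le> B\<close>]) (use k t in simp)
    also have "\<dots> \<le> (64 * B) ^ k * real (card X) ^ 4"
      unfolding t by (rule mult_right_mono[OF mult_power_le_power_Suc[OF \<open>1 \<le> B\<close>]]) simp
    also have "\<dots> = (1024 * real k / \<epsilon>) ^ k * real (card X) ^ 4" unfolding B_def by simp
    finally show ?thesis by simp
  qed
qed (simp)

end
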